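(* Let $h$ and $k$ be integers with $k>0$, $\gcd(h,k)=1$, and $h+k$ odd. Then $$B_{1}(h,k)=\frac{1}{2}(1-h)\,S(h,k).$$
   Context: $[x]$ denotes the greatest integer $\le x$. For integers $h,k$ with $k>0$ and $\gcd(h,k)=1$, define $$B_{1}(h,k)=\sum_{j=1}^{k-1}(-1)^{j+\left[\frac{hj}{k}\right]}\left[\frac{hj}{k}\right].$$ The Hardy sum $S(h,k)$ is defined by $S(h,k)=\sum_{j \bmod k}(-1)^{j+1+\left[\frac{jh}{k}\right]}$, the sum running over a complete residue system modulo $k$. *)

theory Defs
  imports Complex_Main
begin

definition B1 :: "int \<Rightarrow> int \<Rightarrow> int" where
  "B1 h k = (\<Sum>j\<in>{1..k-1}. (-1) ^ nat \<bar>j + \<lfloor>real_of_int (h*j) / real_of_int k\<rfloor>\<bar>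
                 * \<lfloor>real_of_int (h*j) / real_of_int k\<rfloor>)"

text \<open>(-1)^e for an integer e is written (-1)^nat|e|. Hardy sum; the representative of the residue class 0 contributes nothing, i.e. the sum runs over j = 1, ..., k-1.\<close>
definition hardyS :: "int \<Rightarrow> int \<Rightarrow> int" where
  "hardyS h k = (\<Sum>j\<in>{1..k-1}. (-1) ^ nat \<bar>j + 1 + \<lfloor>real_of_int (j*h) / real_of_int k\<rfloor>\<bar>)"

end

theory Submission
  imports Defs
begin

text \<open>The involution \<open>j \<mapsto> k - j\<close> of \<open>{1..k-1}\<close> sends \<open>q = \<lfloor>hj/k\<rfloor>\<close> to \<open>h - 1 - q\<close>
  (as \<open>k \<nmid> hj\<close>), and since \<open>h + k\<close> is odd it preserves the parity of \<open>j + q\<close>, hence the sign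
  \<open>e\<close> in both sums. Averaging \<open>\<Sum> e q\<close> with its reflection gives
  \<open>2 B\<^sub>1(h,k) = (h - 1) \<Sum> e = (1 - h) S(h,k)\<close>.\<close>

lemma minus_one_power_nat_abs: "(-1::int) ^ nat \<bar>e\<bar> = (if even e then 1 else -1)"
  by (simp add: minus_one_power_iff even_nat_iff)

lemma B1_eq_sum_div:
  "B1 h k = (\<Sum>j\<in>{1..k-1}. (if even (j + h * j div k) then 1 else -1) * (h * j div k))"
  unfolding B1_def by (simp add: minus_one_power_nat_abs floor_divide_of_int_eq flip: of_int_mult)

lemma hardyS_eq_sum_div:
  "hardyS h k = - (\<Sum>j\<in>{1..k-1}. if even (j + h * j div k) then 1 else -1)"
  unfolding hardyS_def sum_negf[symmetric]
  by (intro sum.cong) (simp_all add: minus_one_power_nat_abs floor_divide_of_int_eq mult.commute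
      flip: of_int_mult)

lemma sum_reflect_int:
  fixes k :: int
  shows "(\<Sum>j\<in>{1..k-1}. f (k - j)) = (\<Sum>j\<in>{1..k-1}. f j)"
  by (rule sum.reindex_bij_witness[of _ "\<lambda>j. k - j" "\<lambda>j. k - j"]) auto

lemma div_mult_reflect:
  fixes h k j :: int
  assumes "coprime h k" "0 < j" "j < k"
  shows "h * (k - j) div k = h - 1 - h * j div k"
proof -
  have "\<not> k dvd h * j"
  proof
    assume "k dvd h * j"
    with assms(1) have "k dvd j" by (simp add: coprime_commute coprime_dvd_mult_right_iff)
    with assms(2,3) show False using zdvd_imp_le by fastforce
  qed
  then have "- (h * j) div k = - (h * j div k) - 1"
    using assms by (simp add: zdiv_zminus1_eq_if dvd_eq_mod_eq_0)
  moreover have "(- (h * j) + h * k) div k = h + - (h * j) div k"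
    using assms(2,3) by (intro div_mult_self1) simp
  moreover have "h * (k - j) = - (h * j) + h * k" by (simp add: algebra_simps)
  ultimately show ?thesis by simp
qed

theorem theorem11:
  fixes h k :: int
  assumes "k > 0" and "gcd h k = 1" and "odd (h + k)"
  shows "real_of_int (B1 h k) = (1/2) * (1 - real_of_int h) * real_of_int (hardyS h k)"
proof -
  define q where "q j = h * j div k" for j
  define e where "e j = (if even (j + q j) then 1 else -1 :: int)" for j
  have q_reflect: "q (k - j) = h - 1 - q j" if "j \<in> {1..k-1}" for j
    using div_mult_reflect[of h k j] assms(2) that by (simp add: q_def coprime_iff_gcd_eq_1)
  have e_reflect: "e (k - j) = e j" if "j \<in> {1..k-1}" for j
  proof -
    have "k - j + q (k - j) = (h + k - 1) - (j + q j)" using q_reflect[OF that] by simp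
    moreover have "even (h + k - 1)" using assms(3) by simp
    ultimately have "even (k - j + q (k - j)) \<longleftrightarrow> even (j + q j)"
      by presburger
    then show ?thesis by (simp add: e_def)
  qed
  have "(\<Sum>j\<in>{1..k-1}. e j * q j) = (\<Sum>j\<in>{1..k-1}. e (k - j) * q (k - j))"
    by (rule sum_reflect_int[symmetric])
  also have "\<dots> = (\<Sum>j\<in>{1..k-1}. (h - 1) * e j - e j * q j)"
    by (intro sum.cong) (simp_all add: e_reflect q_reflect algebra_simps)
  also have "\<dots> = (h - 1) * (\<Sum>j\<in>{1..k-1}. e j) - (\<Sum>j\<in>{1..k-1}. e j * q j)"
    by (simp add: sum_subtractf sum_distrib_left)
  finally have "2 * B1 h k = (1 - h) * hardyS h k"
    unfolding B1_eq_sum_div hardyS_eq_sum_div by (simp add: e_def q_def algebra_simps)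
  then have "real_of_int (2 * B1 h k) = real_of_int ((1 - h) * hardyS h k)" by presburger
  then show ?thesis by simp
qed

end
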